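(* Let $\mathcal{H}=(V,E)$ be a hypergraph with no repeated hyperedge, $V=\{v_1,\dots,v_n\}$, of range $k_{\max}\geq 2$, and let $\mathcal{A}_{\mathcal{H}}=(a_{i_1\dots i_{k_{\max}}})$ be its layered e-adjacency tensor (defined in the context). Let $d_i=\deg(v_i)$ for $i\in\{1,\dots,n\}$ and $d_{n+i}=\deg(y_i)$ for $i\in\{1,\dots,k_{\max}-1\}$ (degrees in the layered uniform hypergraph, defined in the context). Then for every $i\in\{1,\dots,n+k_{\max}-1\}$, $$\sum_{\substack{i_2,\dots,i_{k_{\max}}=1\\ \delta_{i i_2\dots i_{k_{\max}}}=0}}^{n+k_{\max}-1} a_{i i_2\dots i_{k_{\max}}} = d_i,$$ where $\delta_{i i_2\dots i_{k_{\max}}}$ equals $1$ if $i=i_2=\dots=i_{k_{\max}}$ and $0$ otherwise. Moreover, for every $j\in\{2,\dots,k_{\max}-1\}$, $|\{e\in E: |e|=j\}| = d_{n+j}-d_{n+j-1}$, and $|\{e\in E:|e|=1\}|=d_{n+1}$.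
   Context: A hypergraph $\mathcal{H}=(V,E)$ on the vertex set $V=\{v_1,\dots,v_n\}$ is a family $E$ of nonempty subsets (hyperedges) of $V$; it has no repeated hyperedge if its hyperedges are pairwise distinct. The range is $k_{\max}=\max\{|e|:e\in E\}$, and $\deg(v_i)$ is the number of hyperedges containing $v_i$. Introduce $k_{\max}-1$ new pairwise distinct vertices $y_1,\dots,y_{k_{\max}-1}\notin V$. The layered uniform hypergraph of $\mathcal{H}$ is the $k_{\max}$-uniform hypergraph on $V\cup\{y_1,\dots,y_{k_{\max}-1}\}$ whose hyperedges are $\hat e = e\cup\{y_{|e|},y_{|e|+1},\dots,y_{k_{\max}-1}\}$ for $e\in E$ (so nothing is added when $|e|=k_{\max}$); $\deg(y_i)$ is the number of such hyperedges containing $y_i$. The layered e-adjacency tensor $\mathcal{A}_{\mathcal{H}}$ is the symmetric hypermatrix of order $k_{\max}$ and dimension $n+k_{\max}-1$ (indices $1,\dots,n$ correspond to $v_1,\dots,v_n$, index $n+l$ corresponds to $y_l$) defined as follows: for each hyperedge $e=\{v_{i_1},\dots,v_{i_j}\}\in E$ with $i_1<\dots<i_j$, set $i_l=n+l-1$ for $l\in\{j+1,\dots,k_{\max}\}$; then for every permutation $\sigma$ of $\{1,\dots,k_{\max}\}$, the entry with index tuple $(i_{\sigma(1)},\dots,i_{\sigma(k_{\max})})$ equals $\frac{1}{(k_{\max}-1)!}$. All other entries are $0$. *)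

theory Defs
  imports Complex_Main "HOL-Library.Multiset"
begin

(* Vertices v_1..v_n are the naturals 1..n; y_l is the natural n+l.
   A hypergraph is a set E of nonempty subsets of {1..n} (so no repeated hyperedge). *)

definition kmax :: "nat set set \<Rightarrow> nat" where
  "kmax E = Max (card ` E)"

definition layer_edge :: "nat \<Rightarrow> nat set set \<Rightarrow> nat set \<Rightarrow> nat set" where
  "layer_edge n E e = e \<union> {n + l | l. card e \<le> l \<and> l \<le> kmax E - 1}"

definition vdeg :: "nat set set \<Rightarrow> nat \<Rightarrow> nat" where
  "vdeg E i = card {e \<in> E. i \<in> e}"

definition ydeg :: "nat \<Rightarrow> nat set set \<Rightarrow> nat \<Rightarrow> nat" where
  "ydeg n E l = card {f \<in> layer_edge n E ` E. n + l \<in> f}"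

definition dseq :: "nat \<Rightarrow> nat set set \<Rightarrow> nat \<Rightarrow> nat" where
  "dseq n E i = (if i \<le> n then vdeg E i else ydeg n E (i - n))"

(* entry of the layered e-adjacency tensor at the index tuple xs (a list of length kmax):
   1/(kmax-1)! if xs is a permutation of the index tuple of some hyperedge e, i.e. of
   (i_1,...,i_j, n+j, ..., n+kmax-1), and 0 otherwise. *)
definition lay_tensor :: "nat \<Rightarrow> nat set set \<Rightarrow> nat list \<Rightarrow> real" where
  "lay_tensor n E xs =
     (if length xs = kmax E \<and> (\<exists>e\<in>E. mset xs = mset_set (layer_edge n E e))
      then 1 / fact (kmax E - 1) else 0)"

end

theory Submission
  imports Defs "HOL-Combinatorics.Multiset_Permutations"
begin

(* A hyperedge e containing i contributes to row i exactly the (k-1)! tuples (i, i_2, ..., i_k)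
   enumerating its layered edge, each with weight 1/(k-1)!; for k >= 2 none of them is the
   diagonal tuple (i, ..., i). Hence row i sums to the layered degree of i. Layering is injective,
   so for an original vertex this is its degree in H, while y_l lies in the layered edge of e
   iff |e| <= l; so deg y_l counts the hyperedges of size at most l, and consecutive differences
   count those of size exactly l. *)

lemma mset_Cons_eq_mset_set_iff:
  assumes "finite A"
  shows "mset (i # xs) = mset_set A \<longleftrightarrow> i \<in> A \<and> xs \<in> permutations_of_set (A - {i})"
proof -
  have "mset (i # xs) = M \<longleftrightarrow> i \<in># M \<and> mset xs = M - {#i#}" for M
    by (auto simp: insert_DiffM)
  then have "mset (i # xs) = mset_set A \<longleftrightarrow> i \<in> A \<and> mset xs = mset_set A - {#i#}"
    using assms by simp
  also have "\<dots> \<longleftrightarrow> i \<in> A \<and> mset xs = mset_set (A - {i})"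
    using assms mset_set_Diff[of A "{i}"] by auto
  finally show ?thesis
    using assms by (simp add: permutations_of_set_altdef permutations_of_multiset_def)
qed

lemma card_lists_completing_to_family:
  assumes "finite U" and "\<And>f. f \<in> F \<Longrightarrow> f \<subseteq> U" and "\<And>f. f \<in> F \<Longrightarrow> card f = k"
  shows "card {xs. \<exists>f\<in>F. mset (i # xs) = mset_set f} = fact (k - 1) * card {f \<in> F. i \<in> f}"
proof -
  have finite_F: "finite F"
    by (rule finite_subset[of F "Pow U"]) (use assms(1,2) in auto)
  have finite_f: "finite f" if "f \<in> F" for f
    using assms(1,2) that finite_subset by blast
  have "{xs. \<exists>f\<in>F. mset (i # xs) = mset_set f} =
      (\<Union>f\<in>{f \<in> F. i \<in> f}. permutations_of_set (f - {i}))"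
    using finite_f by (auto simp del: mset.simps simp: mset_Cons_eq_mset_set_iff)
  also have "card \<dots> = (\<Sum>f\<in>{f \<in> F. i \<in> f}. card (permutations_of_set (f - {i})))"
  proof (rule card_UN_disjoint)
    show "\<forall>f\<in>{f \<in> F. i \<in> f}. \<forall>g\<in>{f \<in> F. i \<in> f}. f \<noteq> g \<longrightarrow>
        permutations_of_set (f - {i}) \<inter> permutations_of_set (g - {i}) = {}"
      by (auto dest!: permutations_of_setD(1))
  qed (use finite_F in auto)
  also have "\<dots> = (\<Sum>f\<in>{f \<in> F. i \<in> f}. fact (k - 1))"
    using finite_f assms(3) by (intro sum.cong) (auto simp: card_Diff_singleton)
  finally show ?thesis
    by simp
qed

lemma e_adjacency_row_sum:
  assumes "finite U" and "\<And>f. f \<in> F \<Longrightarrow> f \<subseteq> U" and "\<And>f. f \<in> F \<Longrightarrow> card f = k"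
    and "2 \<le> k"
  shows "(\<Sum>xs\<in>{xs. length xs = k - 1 \<and> set xs \<subseteq> U \<and> \<not> (\<forall>x\<in>set xs. x = i)}.
            if \<exists>f\<in>F. mset (i # xs) = mset_set f then 1 / fact (k - 1) else 0)
         = real (card {f \<in> F. i \<in> f})"
    (is "(\<Sum>xs\<in>?S. _) = _")
proof -
  let ?P = "{xs. \<exists>f\<in>F. mset (i # xs) = mset_set f}"
  have "?P \<subseteq> ?S"
  proof
    fix xs assume "xs \<in> ?P"
    then obtain f where "f \<in> F" and "mset (i # xs) = mset_set f"
      by blast
    moreover have "finite f"
      using assms(1,2) \<open>f \<in> F\<close> finite_subset by blast
    ultimately have f: "f \<in> F" "i \<in> f" "xs \<in> permutations_of_set (f - {i})"
      by (simp_all del: mset.simps add: mset_Cons_eq_mset_set_iff)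
    then have "length xs = k - 1"
      using assms(3) by (simp add: length_finite_permutations_of_set card_Diff_singleton_if)
    moreover have "set xs = f - {i}"
      using f(3) by (rule permutations_of_setD)
    ultimately show "xs \<in> ?S"
      using assms(2,4) f(1) by (cases xs) auto
  qed
  have "finite ?S"
    by (rule finite_subset[OF _ finite_lists_length_eq[OF assms(1), of "k - 1"]]) auto
  then have "(\<Sum>xs\<in>?S. if xs \<in> ?P then 1 / fact (k - 1) else 0)
      = (\<Sum>xs\<in>?S \<inter> ?P. 1 / fact (k - 1))"
    by (simp only: sum.inter_restrict)
  also have "?S \<inter> ?P = ?P"
    using \<open>?P \<subseteq> ?S\<close> by blast
  also have "(\<Sum>xs\<in>?P. 1 / fact (k - 1)) = real (card {f \<in> F. i \<in> f})"
    using card_lists_completing_to_family[OF assms(1-3), where i = i] by simp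
  finally show ?thesis
    by simp
qed

locale hypergraph =
  fixes n :: nat and E :: "nat set set"
  assumes edge_nonempty: "e \<in> E \<Longrightarrow> e \<noteq> {}"
    and edge_subset: "e \<in> E \<Longrightarrow> e \<subseteq> {1..n}"
begin

lemma finite_edges: "finite E"
  by (rule finite_subset[of E "Pow {1..n}"]) (use edge_subset in auto)

lemma finite_edge: "e \<in> E \<Longrightarrow> finite e"
  using edge_subset finite_subset by blast

lemma card_edge_pos: "e \<in> E \<Longrightarrow> 0 < card e"
  using edge_nonempty finite_edge by (simp add: card_gt_0_iff)

lemma card_edge_le_kmax: "e \<in> E \<Longrightarrow> card e \<le> kmax E"
  unfolding kmax_def using finite_edges by simp

lemma layer_edge_eq: "layer_edge n E e = e \<union> {n + card e..n + (kmax E - 1)}"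
  unfolding layer_edge_def by (auto simp: le_iff_add)

lemma mem_layer_edge_low: "e \<in> E \<Longrightarrow> i \<le> n \<Longrightarrow> i \<in> layer_edge n E e \<longleftrightarrow> i \<in> e"
  using card_edge_pos[of e] by (auto simp: layer_edge_eq)

lemma mem_layer_edge_high:
  "e \<in> E \<Longrightarrow> 0 < l \<Longrightarrow> n + l \<in> layer_edge n E e \<longleftrightarrow> card e \<le> l \<and> l \<le> kmax E - 1"
  using edge_subset[of e] by (force simp: layer_edge_eq)

lemma inj_on_layer_edge: "inj_on (layer_edge n E) E"
proof (rule inj_onI)
  fix e e' assume "e \<in> E" "e' \<in> E" "layer_edge n E e = layer_edge n E e'"
  then show "e = e'"
    using mem_layer_edge_low edge_subset by (metis atLeastAtMost_iff subset_eq subset_antisym)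
qed

lemma layer_edge_subset: "e \<in> E \<Longrightarrow> layer_edge n E e \<subseteq> {1..n + kmax E - 1}"
  using edge_subset card_edge_pos card_edge_le_kmax by (fastforce simp: layer_edge_eq)

lemma card_layer_edge: "e \<in> E \<Longrightarrow> card (layer_edge n E e) = kmax E"
proof -
  assume e: "e \<in> E"
  have "e \<inter> {n + card e..n + (kmax E - 1)} = {}"
    using edge_subset[OF e] card_edge_pos[OF e] by auto
  then have "card (layer_edge n E e) = card e + card {n + card e..n + (kmax E - 1)}"
    by (simp add: layer_edge_eq card_Un_disjoint finite_edge[OF e])
  then show ?thesis
    using card_edge_pos[OF e] card_edge_le_kmax[OF e] by simp
qed

lemma dseq_eq_layered_degree: "dseq n E i = card {f \<in> layer_edge n E ` E. i \<in> f}"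
proof (cases "i \<le> n")
  case True
  have "{f \<in> layer_edge n E ` E. i \<in> f} = layer_edge n E ` {e \<in> E. i \<in> e}"
    using mem_layer_edge_low[OF _ True] by auto
  moreover have "card (layer_edge n E ` {e \<in> E. i \<in> e}) = card {e \<in> E. i \<in> e}"
    by (rule card_image, rule inj_on_subset[OF inj_on_layer_edge]) auto
  ultimately show ?thesis
    using True by (simp add: dseq_def vdeg_def)
qed (simp add: dseq_def ydeg_def)

lemma dseq_layer_vertex:
  assumes "0 < l" and "l < kmax E"
  shows "dseq n E (n + l) = card {e \<in> E. card e \<le> l}"
proof -
  have "{f \<in> layer_edge n E ` E. n + l \<in> f} = layer_edge n E ` {e \<in> E. card e \<le> l}"
    using mem_layer_edge_high assms by auto
  moreover have "card (layer_edge n E ` {e \<in> E. card e \<le> l}) = card {e \<in> E. card e \<le> l}"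
    by (rule card_image, rule inj_on_subset[OF inj_on_layer_edge]) auto
  ultimately show ?thesis
    by (simp add: dseq_eq_layered_degree)
qed

lemma lay_tensor_Cons:
  assumes "length xs = kmax E - 1"
  shows "lay_tensor n E (i # xs) =
    (if \<exists>f\<in>layer_edge n E ` E. mset (i # xs) = mset_set f then 1 / fact (kmax E - 1) else 0)"
proof (cases "E = {}")
  case False
  then have "0 < kmax E"
    using card_edge_pos card_edge_le_kmax by fastforce
  then show ?thesis
    using assms by (simp add: lay_tensor_def)
qed (simp add: lay_tensor_def)

lemma lay_tensor_row_sum:
  assumes "2 \<le> kmax E"
  shows "(\<Sum>xs\<in>{xs. length xs = kmax E - 1 \<and> set xs \<subseteq> {1..n + kmax E - 1}
                 \<and> \<not> (\<forall>x\<in>set xs. x = i)}. lay_tensor n E (i # xs)) = real (dseq n E i)"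
proof -
  have "(\<Sum>xs\<in>{xs. length xs = kmax E - 1 \<and> set xs \<subseteq> {1..n + kmax E - 1}
                 \<and> \<not> (\<forall>x\<in>set xs. x = i)}. lay_tensor n E (i # xs))
      = real (card {f \<in> layer_edge n E ` E. i \<in> f})"
    using layer_edge_subset card_layer_edge assms
    by (subst e_adjacency_row_sum[symmetric]) (auto intro!: sum.cong simp: lay_tensor_Cons)
  then show ?thesis
    by (simp add: dseq_eq_layered_degree)
qed

lemma card_edges_of_size:
  assumes "1 < j" and "j < kmax E"
  shows "int (card {e \<in> E. card e = j}) = int (dseq n E (n + j)) - int (dseq n E (n + j - 1))"
proof -
  have split: "{e \<in> E. card e \<le> j} = {e \<in> E. card e \<le> j - 1} \<union> {e \<in> E. card e = j}"
    by auto
  have "card {e \<in> E. card e \<le> j} = card {e \<in> E. card e \<le> j - 1} + card {e \<in> E. card e = j}"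
    unfolding split by (rule card_Un_disjoint) (use finite_edges assms in auto)
  moreover have "dseq n E (n + j - 1) = card {e \<in> E. card e \<le> j - 1}"
    using dseq_layer_vertex[of "j - 1"] assms by simp
  ultimately show ?thesis
    using dseq_layer_vertex[of j] assms by simp
qed

lemma card_singleton_edges:
  assumes "2 \<le> kmax E"
  shows "card {e \<in> E. card e = 1} = dseq n E (n + 1)"
proof -
  have "{e \<in> E. card e = 1} = {e \<in> E. card e \<le> 1}"
    using card_edge_pos by fastforce
  then show ?thesis
    using dseq_layer_vertex[of 1] assms by simp
qed

end

theorem mainTheorem1:
  fixes n :: nat and E :: "nat set set"
  assumes edges: "\<forall>e\<in>E. e \<noteq> {} \<and> e \<subseteq> {1..n}"
    and nonempty: "E \<noteq> {}"
    and range: "kmax E \<ge> 2"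
  shows "(\<forall>i\<in>{1..n + kmax E - 1}.
            (\<Sum>xs\<in>{xs. length xs = kmax E - 1 \<and> set xs \<subseteq> {1..n + kmax E - 1}
                       \<and> \<not> (\<forall>x\<in>set xs. x = i)}.
               lay_tensor n E (i # xs)) = real (dseq n E i))
     \<and> (\<forall>j\<in>{2..kmax E - 1}.
            int (card {e \<in> E. card e = j}) = int (dseq n E (n + j)) - int (dseq n E (n + j - 1)))
     \<and> card {e \<in> E. card e = 1} = dseq n E (n + 1)"
proof -
  interpret hypergraph n E
    using edges by unfold_locales auto
  show ?thesis
    using lay_tensor_row_sum card_edges_of_size card_singleton_edges range by auto
qed

end
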